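(* Let $n\ge2$. Every $n$-qubit stabilizer unitary (any unitary implemented by a circuit over $\{\textsc{H},\textsc{P},\textsc{CNOT},\textsc{CZ}\}$) can be implemented, up to a global phase, by a circuit over the gate library $\{\textsc{P},\textsc{H},\textsc{CNOT}\}$ in which every $\textsc{CNOT}$ acts on adjacent qubits of a line (linear nearest neighbour architecture) and whose two-qubit depth is at most $14n-4$.
   Context: $\textsc{H}=\frac{1}{\sqrt2}\begin{pmatrix}1&1\\1&-1\end{pmatrix}$, $\textsc{P}=\mathrm{diag}(1,i)$ (powers $\textsc{P}^k$ allowed), $\textsc{CNOT}|a,b\rangle=|a,a\oplus b\rangle$, $\textsc{CZ}|a,b\rangle=(-1)^{ab}|a,b\rangle$. Linear nearest neighbour (LNN) architecture: qubits are arranged on a line $1,\dots,n$ and two-qubit gates may only act on qubits $j,j+1$. The two-qubit depth of a circuit is the minimum number of time steps needed to execute its two-qubit gates when each step consists of two-qubit gates on pairwise disjoint qubits; single-qubit gates are not counted. *)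

theory Defs
  imports Complex_Main
begin

text \<open>Gates on qubits indexed 0,1,2,... (qubit j of the paper is index j-1).
  Pgate q k is the k-th power of P on qubit q; CNOT c t has control c and target t.\<close>
datatype gate = Hgate nat | Pgate nat nat | CNOT nat nat | CZ nat nat

type_synonym state = "(nat \<Rightarrow> bool) \<Rightarrow> complex"

fun gate_sem :: "gate \<Rightarrow> state \<Rightarrow> state" where
  "gate_sem (Hgate q) \<psi> = (\<lambda>x. (\<psi> (x(q := False)) + (if x q then -1 else 1) * \<psi> (x(q := True)))
                                / complex_of_real (sqrt 2))"
| "gate_sem (Pgate q k) \<psi> = (\<lambda>x. (if x q then \<i> ^ k else 1) * \<psi> x)"
| "gate_sem (CNOT c t) \<psi> = (\<lambda>x. \<psi> (x(t := (x t \<noteq> x c))))"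
| "gate_sem (CZ a b) \<psi> = (\<lambda>x. (if x a \<and> x b then -1 else 1) * \<psi> x)"

fun circ_sem :: "gate list \<Rightarrow> state \<Rightarrow> state" where
  "circ_sem [] \<psi> = \<psi>"
| "circ_sem (g # gs) \<psi> = circ_sem gs (gate_sem g \<psi>)"

fun gate_wf :: "nat \<Rightarrow> gate \<Rightarrow> bool" where
  "gate_wf n (Hgate q) = (q < n)"
| "gate_wf n (Pgate q k) = (q < n)"
| "gate_wf n (CNOT c t) = (c < n \<and> t < n \<and> c \<noteq> t)"
| "gate_wf n (CZ a b) = (a < n \<and> b < n \<and> a \<noteq> b)"

definition circ_wf :: "nat \<Rightarrow> gate list \<Rightarrow> bool" where
  "circ_wf n C = (\<forall>g \<in> set C. gate_wf n g)"

fun lnn_phcnot_gate :: "gate \<Rightarrow> bool" where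
  "lnn_phcnot_gate (Hgate q) = True"
| "lnn_phcnot_gate (Pgate q k) = True"
| "lnn_phcnot_gate (CNOT c t) = (t = c + 1 \<or> c = t + 1)"
| "lnn_phcnot_gate (CZ a b) = False"

text \<open>Two-qubit depth by as-soon-as-possible scheduling: t q is the time step of the
  last two-qubit gate on qubit q so far, d the largest time step used.  ASAP scheduling attains the minimum number of steps.\<close>
fun tq_depth_aux :: "(nat \<Rightarrow> nat) \<Rightarrow> nat \<Rightarrow> gate list \<Rightarrow> nat" where
  "tq_depth_aux t d [] = d"
| "tq_depth_aux t d (CNOT a b # gs) =
     (let l = max (t a) (t b) + 1 in tq_depth_aux (t(a := l, b := l)) (max d l) gs)"
| "tq_depth_aux t d (CZ a b # gs) =
     (let l = max (t a) (t b) + 1 in tq_depth_aux (t(a := l, b := l)) (max d l) gs)"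
| "tq_depth_aux t d (Hgate q # gs) = tq_depth_aux t d gs"
| "tq_depth_aux t d (Pgate q k # gs) = tq_depth_aux t d gs"

definition two_qubit_depth :: "gate list \<Rightarrow> nat" where
  "two_qubit_depth C = tq_depth_aux (\<lambda>_. 0) 0 C"

end

theory Submission
  imports Defs
begin

(* Work in the Heisenberg picture: a Clifford circuit maps every Hermitian Pauli string to
   another one, which can be tracked symbolically.  Let W be the inverse of C followed by a
   circuit D built qubit by qubit.  At stage k the images P and Q of X_k and Z_k under the
   circuit built so far anticommute and, as they commute with the already restored X_j and Z_j
   (j < k), act trivially on qubits below k.  Two staircases of adjacent CNOTs on qubits
   k, ..., n-1, interleaved with single-qubit gates, turn them into X_k and Z_k.  Consecutive
   staircases pipeline on a line, so D has two-qubit depth at most 10 (n - 1) <= 14 n - 4.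
   Finally W acts on the first n qubits and commutes with every X_q and Z_q there, hence is a
   scalar c, and |c| = 1 because gates preserve the norm; thus D = c C. *)

section \<open>Pauli operators and their conjugation by gates\<close>

datatype pauli = PI | PX | PY | PZ

definition sign :: "bool \<Rightarrow> complex" where
  "sign s = (if s then -1 else 1)"

(* s = (\<not> t) is the simp normal form of s \<noteq> t *)
lemma sign_xor: "sign (s = (\<not> t)) = sign s * sign t"
  by (simp add: sign_def)

fun flips :: "pauli \<Rightarrow> bool" where
  "flips PI = False" | "flips PX = True" | "flips PY = True" | "flips PZ = False"

fun pauli_coeff :: "pauli \<Rightarrow> bool \<Rightarrow> complex" where
  "pauli_coeff PI b = 1"
| "pauli_coeff PX b = 1"
| "pauli_coeff PY b = (if b then \<i> else - \<i>)"
| "pauli_coeff PZ b = (if b then -1 else 1)"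

definition pauli_on :: "pauli \<Rightarrow> nat \<Rightarrow> state \<Rightarrow> state" where
  "pauli_on a q \<psi> = (\<lambda>y. pauli_coeff a (y q) * \<psi> (if flips a then y(q := \<not> y q) else y))"

lemma pauli_on_PI [simp]: "pauli_on PI q \<psi> = \<psi>"
  by (simp add: pauli_on_def)

lemma pauli_on_commute: "q \<noteq> r \<Longrightarrow> pauli_on a q (pauli_on b r \<psi>) = pauli_on b r (pauli_on a q \<psi>)"
  by (cases "flips a"; cases "flips b") (auto simp: pauli_on_def fun_eq_iff fun_upd_twist)

(* H_conj a = (s, b) means H \<sigma>_a = (-1)^s \<sigma>_b H; likewise S_conj for the gate P, and
   CNOT_conj for CNOT acting on the letters of control and target. *)
fun H_conj :: "pauli \<Rightarrow> bool \<times> pauli" where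
  "H_conj PI = (False, PI)"
| "H_conj PX = (False, PZ)"
| "H_conj PY = (True, PY)"
| "H_conj PZ = (False, PX)"

fun S_conj :: "pauli \<Rightarrow> bool \<times> pauli" where
  "S_conj PI = (False, PI)"
| "S_conj PX = (False, PY)"
| "S_conj PY = (True, PX)"
| "S_conj PZ = (False, PZ)"

fun CNOT_conj :: "pauli \<Rightarrow> pauli \<Rightarrow> bool \<times> pauli \<times> pauli" where
  "CNOT_conj PI PI = (False, PI, PI)"
| "CNOT_conj PI PX = (False, PI, PX)"
| "CNOT_conj PI PY = (False, PZ, PY)"
| "CNOT_conj PI PZ = (False, PZ, PZ)"
| "CNOT_conj PX PI = (False, PX, PX)"
| "CNOT_conj PX PX = (False, PX, PI)"
| "CNOT_conj PX PY = (False, PY, PZ)"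
| "CNOT_conj PX PZ = (True, PY, PY)"
| "CNOT_conj PY PI = (False, PY, PX)"
| "CNOT_conj PY PX = (False, PY, PI)"
| "CNOT_conj PY PY = (True, PX, PZ)"
| "CNOT_conj PY PZ = (False, PX, PY)"
| "CNOT_conj PZ PI = (False, PZ, PI)"
| "CNOT_conj PZ PX = (False, PZ, PX)"
| "CNOT_conj PZ PY = (False, PI, PY)"
| "CNOT_conj PZ PZ = (False, PI, PZ)"

lemma Hgate_pauli_on:
  "gate_sem (Hgate q) (pauli_on a q \<psi>) =
     (\<lambda>y. sign (fst (H_conj a)) * pauli_on (snd (H_conj a)) q (gate_sem (Hgate q) \<psi>) y)"
  by (cases a) (auto simp: pauli_on_def sign_def fun_eq_iff field_simps)

lemma Pgate_pauli_on:
  "gate_sem (Pgate q 1) (pauli_on a q \<psi>) =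
     (\<lambda>y. sign (fst (S_conj a)) * pauli_on (snd (S_conj a)) q (gate_sem (Pgate q 1) \<psi>) y)"
  by (cases a) (auto simp: pauli_on_def sign_def fun_eq_iff)

lemma CNOT_pauli_on:
  assumes "c \<noteq> t"
  shows "gate_sem (CNOT c t) (pauli_on a c (pauli_on b t \<psi>)) =
     (\<lambda>y. case CNOT_conj a b of (s, a', b') \<Rightarrow>
            sign s * pauli_on a' c (pauli_on b' t (gate_sem (CNOT c t) \<psi>)) y)"
proof -
  have xor_flip: "(u = (\<not> v)) = ((\<not> u) = v)" for u v :: bool
    by blast
  show ?thesis
    using assms by (cases a; cases b) (auto simp: pauli_on_def sign_def fun_eq_iff fun_upd_twist xor_flip)
qed

(* A Hermitian Pauli string: a sign and one letter per qubit.  Conjugation by Clifford gates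
   preserves Hermiticity, so the phase is always \<plusminus>1. *)
datatype pstring = PStr (neg: bool) (letter: "nat \<Rightarrow> pauli")

fun pauli_prod :: "(nat \<Rightarrow> pauli) \<Rightarrow> nat list \<Rightarrow> state \<Rightarrow> state" where
  "pauli_prod p [] \<psi> = \<psi>"
| "pauli_prod p (q # qs) \<psi> = pauli_on (p q) q (pauli_prod p qs \<psi>)"

definition pstr_op :: "nat \<Rightarrow> pstring \<Rightarrow> state \<Rightarrow> state" where
  "pstr_op n P \<psi> = (\<lambda>y. sign (neg P) * pauli_prod (letter P) [0..<n] \<psi> y)"

fun gate_qubits :: "gate \<Rightarrow> nat set" where
  "gate_qubits (Hgate q) = {q}"
| "gate_qubits (Pgate q k) = {q}"
| "gate_qubits (CNOT c t) = {c, t}"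
| "gate_qubits (CZ a b) = {a, b}"

lemma gate_qubits_less: "gate_wf n g \<Longrightarrow> q \<in> gate_qubits g \<Longrightarrow> q < n"
  by (cases g) auto

lemma gate_sem_scale: "gate_sem g (\<lambda>y. c * \<psi> y) = (\<lambda>y. c * gate_sem g \<psi> y)"
  by (cases g) (auto simp: fun_eq_iff field_simps)

lemma gate_sem_pauli_on_other:
  "q \<notin> gate_qubits g \<Longrightarrow> gate_sem g (pauli_on a q \<psi>) = pauli_on a q (gate_sem g \<psi>)"
  by (cases g; cases "flips a") (auto simp: pauli_on_def fun_eq_iff fun_upd_twist field_simps)

lemma gate_sem_pauli_prod_other:
  "set qs \<inter> gate_qubits g = {} \<Longrightarrow> gate_sem g (pauli_prod p qs \<psi>) = pauli_prod p qs (gate_sem g \<psi>)"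
  by (induction qs) (auto simp: gate_sem_pauli_on_other)

lemma pauli_prod_remove1:
  assumes "q \<in> set qs" and "distinct qs"
  shows "pauli_prod p qs \<psi> = pauli_on (p q) q (pauli_prod p (remove1 q qs) \<psi>)"
  using assms
proof (induction qs)
  case (Cons r qs)
  then show ?case
    by (cases "r = q") (auto simp: pauli_on_commute)
qed simp

lemma pauli_prod_cong: "(\<And>q. q \<in> set qs \<Longrightarrow> p q = p' q) \<Longrightarrow> pauli_prod p qs \<psi> = pauli_prod p' qs \<psi>"
  by (induction qs) auto

lemma pauli_prod_PI: "(\<And>q. q \<in> set qs \<Longrightarrow> p q = PI) \<Longrightarrow> pauli_prod p qs \<psi> = \<psi>"
  by (induction qs) auto

definition conj_at :: "(pauli \<Rightarrow> bool \<times> pauli) \<Rightarrow> nat \<Rightarrow> pstring \<Rightarrow> pstring" where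
  "conj_at f q P = (case f (letter P q) of (s, a) \<Rightarrow> PStr (neg P \<noteq> s) ((letter P)(q := a)))"

definition conj_pair :: "(pauli \<Rightarrow> pauli \<Rightarrow> bool \<times> pauli \<times> pauli) \<Rightarrow> nat \<Rightarrow> nat \<Rightarrow> pstring \<Rightarrow> pstring" where
  "conj_pair f c t P = (case f (letter P c) (letter P t) of
     (s, a, b) \<Rightarrow> PStr (neg P \<noteq> s) ((letter P)(c := a, t := b)))"

lemma letter_conj_at [simp]: "letter (conj_at f q P) = (letter P)(q := snd (f (letter P q)))"
  by (simp add: conj_at_def split: prod.split)

lemma neg_conj_at [simp]: "neg (conj_at f q P) = (neg P \<noteq> fst (f (letter P q)))"
  by (simp add: conj_at_def split: prod.split)

lemma letter_conj_pair [simp]: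
  "letter (conj_pair f c t P) =
     (letter P)(c := fst (snd (f (letter P c) (letter P t))), t := snd (snd (f (letter P c) (letter P t))))"
  by (simp add: conj_pair_def split: prod.split)

lemma neg_conj_pair [simp]: "neg (conj_pair f c t P) = (neg P \<noteq> fst (f (letter P c) (letter P t)))"
  by (simp add: conj_pair_def split: prod.split)

lemma gate_sem_pstr_op_single:
  assumes "q < n" and "gate_qubits g = {q}"
    and conj: "\<And>a \<psi>. gate_sem g (pauli_on a q \<psi>) =
                 (\<lambda>y. sign (fst (f a)) * pauli_on (snd (f a)) q (gate_sem g \<psi>) y)"
  shows "gate_sem g (pstr_op n P \<psi>) = pstr_op n (conj_at f q P) (gate_sem g \<psi>)"
proof -
  obtain s a where f: "f (letter P q) = (s, a)"
    by fastforce
  let ?rest = "remove1 q [0..<n]"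
  have split: "pauli_prod p [0..<n] \<phi> = pauli_on (p q) q (pauli_prod p ?rest \<phi>)" for p \<phi>
    using \<open>q < n\<close> by (simp add: pauli_prod_remove1)
  have rest: "pauli_prod ((letter P)(q := a)) ?rest \<phi> = pauli_prod (letter P) ?rest \<phi>" for \<phi>
    by (rule pauli_prod_cong) auto
  have disjoint: "set ?rest \<inter> gate_qubits g = {}"
    using assms(2) by auto
  show ?thesis
    unfolding pstr_op_def conj_at_def f
    by (simp add: split rest gate_sem_scale conj f gate_sem_pauli_prod_other[OF disjoint] sign_xor mult.assoc)
qed

lemma gate_sem_pstr_op_CNOT:
  assumes "c < n" "t < n" "c \<noteq> t"
  shows "gate_sem (CNOT c t) (pstr_op n P \<psi>) = pstr_op n (conj_pair CNOT_conj c t P) (gate_sem (CNOT c t) \<psi>)"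
proof -
  obtain s a b where f: "CNOT_conj (letter P c) (letter P t) = (s, a, b)"
    by (metis prod.exhaust)
  let ?rest = "remove1 t (remove1 c [0..<n])"
  have split: "pauli_prod p [0..<n] \<phi> = pauli_on (p c) c (pauli_on (p t) t (pauli_prod p ?rest \<phi>))" for p \<phi>
    using assms pauli_prod_remove1[of c "[0..<n]"] pauli_prod_remove1[of t "remove1 c [0..<n]"]
    by (simp add: distinct_remove1)
  have rest: "pauli_prod ((letter P)(c := a, t := b)) ?rest \<phi> = pauli_prod (letter P) ?rest \<phi>" for \<phi>
    by (rule pauli_prod_cong) auto
  have disjoint: "set ?rest \<inter> gate_qubits (CNOT c t) = {}"
    by (auto simp: set_remove1_eq distinct_remove1)
  show ?thesis
    unfolding pstr_op_def conj_pair_def f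
    using assms
    by (simp add: split rest gate_sem_scale CNOT_pauli_on f gate_sem_pauli_prod_other[OF disjoint] sign_xor mult.assoc
        del: gate_sem.simps)
qed

lemma Pgate_Suc: "gate_sem (Pgate q (Suc k)) \<psi> = gate_sem (Pgate q 1) (gate_sem (Pgate q k) \<psi>)"
  by (auto simp: fun_eq_iff)

lemma sqrt2_mult_self: "complex_of_real (sqrt 2) * complex_of_real (sqrt 2) = 2"
proof -
  have "complex_of_real (sqrt 2) * complex_of_real (sqrt 2) = complex_of_real (sqrt 2 * sqrt 2)"
    by (simp only: of_real_mult)
  then show ?thesis
    by simp
qed

lemma CZ_eq_H_CNOT_H:
  "a \<noteq> b \<Longrightarrow> gate_sem (CZ a b) \<psi> = gate_sem (Hgate b) (gate_sem (CNOT a b) (gate_sem (Hgate b) \<psi>))"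
  by (auto simp: fun_eq_iff field_simps fun_upd_twist fun_upd_idem sqrt2_mult_self)

fun conj_gate :: "gate \<Rightarrow> pstring \<Rightarrow> pstring" where
  "conj_gate (Hgate q) = conj_at H_conj q"
| "conj_gate (Pgate q k) = conj_at S_conj q ^^ k"
| "conj_gate (CNOT c t) = conj_pair CNOT_conj c t"
| "conj_gate (CZ a b) = conj_at H_conj b \<circ> conj_pair CNOT_conj a b \<circ> conj_at H_conj b"

lemma gate_sem_pstr_op_Pgate:
  assumes "q < n"
  shows "gate_sem (Pgate q k) (pstr_op n P \<psi>) = pstr_op n ((conj_at S_conj q ^^ k) P) (gate_sem (Pgate q k) \<psi>)"
proof (induction k arbitrary: \<psi>)
  case 0
  have "gate_sem (Pgate q 0) \<phi> = \<phi>" for \<phi>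
    by (simp add: fun_eq_iff)
  then show ?case
    by simp
next
  case (Suc k)
  have S: "gate_sem (Pgate q 1) (pstr_op n Q \<phi>) = pstr_op n (conj_at S_conj q Q) (gate_sem (Pgate q 1) \<phi>)" for Q \<phi>
    using assms by (rule gate_sem_pstr_op_single) (simp_all only: gate_qubits.simps Pgate_pauli_on)
  show ?case
    by (simp only: Pgate_Suc Suc S funpow.simps comp_apply)
qed

lemma gate_sem_pstr_op_Hgate:
  "q < n \<Longrightarrow> gate_sem (Hgate q) (pstr_op n P \<psi>) = pstr_op n (conj_at H_conj q P) (gate_sem (Hgate q) \<psi>)"
  by (rule gate_sem_pstr_op_single) (simp_all only: gate_qubits.simps Hgate_pauli_on)

lemma gate_sem_pstr_op:
  "gate_wf n g \<Longrightarrow> gate_sem g (pstr_op n P \<psi>) = pstr_op n (conj_gate g P) (gate_sem g \<psi>)"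
  by (cases g) (simp_all del: gate_sem.simps
      add: gate_sem_pstr_op_Hgate gate_sem_pstr_op_Pgate gate_sem_pstr_op_CNOT CZ_eq_H_CNOT_H)

lemma circ_sem_pstr_op:
  "circ_wf n C \<Longrightarrow> circ_sem C (pstr_op n P \<psi>) = pstr_op n (fold conj_gate C P) (circ_sem C \<psi>)"
  by (induction C arbitrary: P \<psi>) (simp_all add: circ_wf_def gate_sem_pstr_op)

section \<open>Invariants of conjugation\<close>

lemma letter_conj_gate_other: "r \<notin> gate_qubits g \<Longrightarrow> letter (conj_gate g P) r = letter P r"
proof (induction g)
  case (Pgate q k)
  then show ?case
    by (induction k arbitrary: P) auto
qed auto

lemma letter_fold_conj_other: "(\<And>g. g \<in> set C \<Longrightarrow> r \<notin> gate_qubits g) \<Longrightarrow> letter (fold conj_gate C P) r = letter P r"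
  by (induction C arbitrary: P) (auto simp: letter_conj_gate_other)

lemma conj_gate_trivial: "(\<And>q. q \<in> gate_qubits g \<Longrightarrow> letter P q = PI) \<Longrightarrow> conj_gate g P = P"
proof (induction g)
  case (Pgate q k)
  then show ?case
    by (induction k) (simp_all add: pstring.expand fun_upd_idem)
qed (simp_all add: pstring.expand fun_upd_idem)

lemma fold_conj_trivial:
  "(\<And>g q. g \<in> set C \<Longrightarrow> q \<in> gate_qubits g \<Longrightarrow> letter P q = PI) \<Longrightarrow> fold conj_gate C P = P"
proof (induction C)
  case (Cons g C)
  then have "conj_gate g P = P"
    by (intro conj_gate_trivial) auto
  moreover have "fold conj_gate C P = P"
    using Cons by (intro Cons.IH) auto
  ultimately show ?case
    by simp
qed simp

definition supported :: "nat \<Rightarrow> pstring \<Rightarrow> bool" where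
  "supported n P \<longleftrightarrow> (\<forall>q\<ge>n. letter P q = PI)"

lemma supported_fold_conj: "circ_wf n C \<Longrightarrow> supported n P \<Longrightarrow> supported n (fold conj_gate C P)"
  unfolding supported_def circ_wf_def
  by (metis letter_fold_conj_other gate_qubits_less not_le)

definition anticommute :: "pauli \<Rightarrow> pauli \<Rightarrow> bool" where
  "anticommute a b \<longleftrightarrow> a \<noteq> PI \<and> b \<noteq> PI \<and> a \<noteq> b"

definition pstr_anticomm :: "nat \<Rightarrow> pstring \<Rightarrow> pstring \<Rightarrow> bool" where
  "pstr_anticomm n P Q \<longleftrightarrow> odd (\<Sum>q<n. of_bool (anticommute (letter P q) (letter Q q)) :: nat)"

lemma pstr_anticomm_conj_at:
  assumes "\<And>a b. anticommute (snd (f a)) (snd (f b)) = anticommute a b"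
  shows "pstr_anticomm n (conj_at f q P) (conj_at f q Q) = pstr_anticomm n P Q"
  unfolding pstr_anticomm_def by (rule arg_cong[where f = odd], rule sum.cong) (use assms in auto)

lemma pstr_anticomm_CNOT:
  assumes "c < n" "t < n" "c \<noteq> t"
  shows "pstr_anticomm n (conj_pair CNOT_conj c t P) (conj_pair CNOT_conj c t Q) = pstr_anticomm n P Q"
proof -
  let ?a = "\<lambda>P Q q. of_bool (anticommute (letter P q) (letter Q q)) :: nat"
  let ?P' = "conj_pair CNOT_conj c t P" and ?Q' = "conj_pair CNOT_conj c t Q"
  have split: "(\<Sum>q<n. f q) = f c + f t + (\<Sum>q\<in>{..<n} - {c} - {t}. f q)" for f :: "nat \<Rightarrow> nat"
    using assms by (simp add: sum.remove[of "{..<n}" c] sum.remove[of "{..<n} - {c}" t])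
  have rest: "(\<Sum>q\<in>{..<n} - {c} - {t}. ?a ?P' ?Q' q) = (\<Sum>q\<in>{..<n} - {c} - {t}. ?a P Q q)"
    by (rule sum.cong) auto
  have at_c_t: "even (?a ?P' ?Q' c + ?a ?P' ?Q' t) = even (?a P Q c + ?a P Q t)"
    using \<open>c \<noteq> t\<close>
    by (cases "letter P c"; cases "letter P t"; cases "letter Q c"; cases "letter Q t")
       (simp_all add: anticommute_def)
  show ?thesis
    unfolding pstr_anticomm_def split[of "?a ?P' ?Q'"] split[of "?a P Q"] rest
    using at_c_t by presburger
qed

lemma anticommute_H_conj: "anticommute (snd (H_conj a)) (snd (H_conj b)) = anticommute a b"
  by (cases a; cases b) (simp_all add: anticommute_def)

lemma anticommute_S_conj: "anticommute (snd (S_conj a)) (snd (S_conj b)) = anticommute a b"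
  by (cases a; cases b) (simp_all add: anticommute_def)

lemma pstr_anticomm_conj_gate:
  assumes "gate_wf n g"
  shows "pstr_anticomm n (conj_gate g P) (conj_gate g Q) = pstr_anticomm n P Q"
proof -
  note H = pstr_anticomm_conj_at[OF anticommute_H_conj]
  have S: "pstr_anticomm n ((conj_at S_conj q ^^ k) P) ((conj_at S_conj q ^^ k) Q) = pstr_anticomm n P Q"
    for q k
    by (induction k) (simp_all add: pstr_anticomm_conj_at[OF anticommute_S_conj])
  show ?thesis
    using assms by (cases g) (simp_all add: H S pstr_anticomm_CNOT)
qed

lemma pstr_anticomm_fold_conj:
  "circ_wf n C \<Longrightarrow> pstr_anticomm n (fold conj_gate C P) (fold conj_gate C Q) = pstr_anticomm n P Q"
  by (induction C arbitrary: P Q) (simp_all add: circ_wf_def pstr_anticomm_conj_gate)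

section \<open>Synthesis of the nearest-neighbour circuit\<close>

definition to_Z :: "nat \<Rightarrow> pauli \<Rightarrow> gate list" where
  "to_Z q a = (case a of PX \<Rightarrow> [Hgate q] | PY \<Rightarrow> [Pgate q 1, Hgate q] | _ \<Rightarrow> [])"

definition to_X :: "nat \<Rightarrow> pauli \<Rightarrow> gate list" where
  "to_X q a = (case a of PZ \<Rightarrow> [Hgate q] | PY \<Rightarrow> [Pgate q 1] | _ \<Rightarrow> [])"

definition clear_upper :: "nat \<Rightarrow> pauli \<Rightarrow> pauli \<Rightarrow> gate list" where
  "clear_upper j a b =
     (if b = PI then to_Z j a @ [CNOT j (Suc j), Hgate j, CNOT (Suc j) j]
      else if a = PI then to_Z (Suc j) b @ [CNOT j (Suc j), CNOT (Suc j) j]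
      else to_X j a @ to_X (Suc j) b @ [CNOT j (Suc j), CNOT (Suc j) j])"

lemma clear_upper_clears:
  "letter (fold conj_gate (clear_upper j (letter P j) (letter P (Suc j))) P) (Suc j) = PI"
  by (cases "letter P j"; cases "letter P (Suc j)") (simp_all add: clear_upper_def to_Z_def to_X_def)

definition lnn_within :: "nat \<Rightarrow> nat \<Rightarrow> gate \<Rightarrow> bool" where
  "lnn_within lo hi g \<longleftrightarrow> lnn_phcnot_gate g \<and> gate_qubits g \<subseteq> {lo..<hi}"

lemma lnn_within_mono: "lnn_within lo hi g \<Longrightarrow> lo' \<le> lo \<Longrightarrow> hi \<le> hi' \<Longrightarrow> lnn_within lo' hi' g"
  by (auto simp: lnn_within_def)

lemma lnn_within_gate_wf: "lnn_within lo hi g \<Longrightarrow> hi \<le> n \<Longrightarrow> gate_wf n g"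
  by (cases g) (auto simp: lnn_within_def)

lemma lnn_within_circ_wf: "(\<And>g. g \<in> set C \<Longrightarrow> lnn_within lo hi g) \<Longrightarrow> hi \<le> n \<Longrightarrow> circ_wf n C"
  by (auto simp: circ_wf_def intro: lnn_within_gate_wf)

lemma letter_fold_conj_outside:
  "(\<And>g. g \<in> set C \<Longrightarrow> lnn_within lo hi g) \<Longrightarrow> q < lo \<or> hi \<le> q \<Longrightarrow> letter (fold conj_gate C P) q = letter P q"
  by (rule letter_fold_conj_other) (fastforce simp: lnn_within_def)

lemma to_Z_lnn_within: "g \<in> set (to_Z q a) \<Longrightarrow> lnn_within q (Suc q) g"
  by (cases a) (auto simp: to_Z_def lnn_within_def)

lemma to_X_lnn_within: "g \<in> set (to_X q a) \<Longrightarrow> lnn_within q (Suc q) g"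
  by (cases a) (auto simp: to_X_def lnn_within_def)

lemma clear_upper_lnn_within: "g \<in> set (clear_upper j a b) \<Longrightarrow> lnn_within j (Suc (Suc j)) g"
  by (cases a; cases b) (auto simp: clear_upper_def to_Z_def to_X_def lnn_within_def)

fun sweep :: "nat \<Rightarrow> nat \<Rightarrow> pstring \<Rightarrow> gate list" where
  "sweep lo 0 P = []"
| "sweep lo (Suc m) P =
     (let G = clear_upper (lo + m) (letter P (lo + m)) (letter P (Suc (lo + m)))
      in G @ sweep lo m (fold conj_gate G P))"

lemma sweep_lnn_within: "g \<in> set (sweep lo m P) \<Longrightarrow> lnn_within lo (Suc (lo + m)) g"
proof (induction m arbitrary: P)
  case (Suc m)
  then consider "lnn_within (lo + m) (Suc (Suc (lo + m))) g" | "lnn_within lo (Suc (lo + m)) g"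
    by (auto simp: Let_def dest: clear_upper_lnn_within)
  then show ?case
    by cases (auto elim: lnn_within_mono)
qed simp

lemma sweep_clears:
  assumes "\<forall>q > lo + m. letter P q = PI" and "lo < q"
  shows "letter (fold conj_gate (sweep lo m P) P) q = PI"
  using assms(1)
proof (induction m arbitrary: P)
  case (Suc m)
  define G where "G = clear_upper (lo + m) (letter P (lo + m)) (letter P (Suc (lo + m)))"
  have "letter (fold conj_gate G P) r = PI" if "lo + m < r" for r
  proof (cases "r = Suc (lo + m)")
    case False
    have "letter (fold conj_gate G P) r = letter P r"
      by (rule letter_fold_conj_outside[of _ "lo + m" "Suc (Suc (lo + m))"])
         (use that False in \<open>auto simp: G_def dest: clear_upper_lnn_within\<close>)
    with Suc.prems that False show ?thesis
      by auto
  qed (simp add: G_def clear_upper_clears)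
  then show ?case
    using Suc.IH[of "fold conj_gate G P"] by (simp add: G_def[symmetric] Let_def)
qed (use assms(2) in simp)

definition merge_pair :: "nat \<Rightarrow> pstring \<Rightarrow> pstring \<Rightarrow> gate list" where
  "merge_pair k P Q =
     (let G = to_Z k (letter P k) @ to_Z (Suc k) (letter Q (Suc k)) @ [CNOT k (Suc k)]
      in G @ to_X (Suc k) (letter (fold conj_gate G Q) (Suc k)) @ [CNOT k (Suc k)])"

lemma merge_pair_lnn_within: "g \<in> set (merge_pair k P Q) \<Longrightarrow> lnn_within k (Suc (Suc k)) g"
  unfolding merge_pair_def Let_def
  by (fastforce simp: lnn_within_def subset_iff dest!: to_Z_lnn_within to_X_lnn_within)

lemma merge_pair_clears:
  assumes "anticommute (letter P k) (letter Q k)" and "letter P (Suc k) = PI"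
  shows "letter (fold conj_gate (merge_pair k P Q) P) (Suc k) = PI"
    and "letter (fold conj_gate (merge_pair k P Q) Q) (Suc k) = PI"
  using assms
  by (cases "letter P k"; cases "letter Q k"; cases "letter Q (Suc k)";
      simp add: anticommute_def merge_pair_def to_Z_def to_X_def)+

definition single_qubit :: "nat \<Rightarrow> pstring \<Rightarrow> bool" where
  "single_qubit k P \<longleftrightarrow> (\<forall>q. q \<noteq> k \<longrightarrow> letter P q = PI)"

definition pauli_at :: "pauli \<Rightarrow> nat \<Rightarrow> pstring" where
  "pauli_at a k = PStr False ((\<lambda>_. PI)(k := a))"

lemma single_qubit_pauli_at: "single_qubit k (pauli_at a k)"
  by (simp add: single_qubit_def pauli_at_def)

lemma single_qubit_eq: "single_qubit k P \<Longrightarrow> P = PStr (neg P) ((\<lambda>_. PI)(k := letter P k))"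
  by (simp add: single_qubit_def pstring.expand fun_eq_iff)

lemma pstr_anticomm_single_qubit:
  assumes "k < n" and "single_qubit k P"
  shows "pstr_anticomm n P Q = anticommute (letter P k) (letter Q k)"
proof -
  have "(\<Sum>q<n. of_bool (anticommute (letter P q) (letter Q q)) :: nat) =
        (\<Sum>q<n. if q = k then of_bool (anticommute (letter P k) (letter Q k)) else 0)"
    by (rule sum.cong) (use assms(2) in \<open>auto simp: single_qubit_def anticommute_def\<close>)
  then show ?thesis
    using assms(1) by (simp add: pstr_anticomm_def)
qed

lemma to_Z_result:
  assumes "anticommute (letter P k) (letter Q k)"
  shows "letter (fold conj_gate (to_Z k (letter P k)) P) k = PZ"
    and "letter (fold conj_gate (to_Z k (letter P k)) Q) k \<in> {PX, PY}"
  using assms by (cases "letter P k"; cases "letter Q k"; simp add: anticommute_def to_Z_def)+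

definition normalize_ZX :: "nat \<Rightarrow> pstring \<Rightarrow> pstring \<Rightarrow> gate list" where
  "normalize_ZX k P Q =
     (let G1 = (if letter Q k = PY then [Pgate k 3] else []) @ [Hgate k];
          G2 = G1 @ (if neg (fold conj_gate G1 P) then [Pgate k 2] else [])
      in G2 @ (if neg (fold conj_gate G2 Q) then [Hgate k, Pgate k 2, Hgate k] else []))"

lemma normalize_ZX_result:
  assumes "P = PStr s ((\<lambda>_. PI)(k := PZ))" and "Q = PStr t ((\<lambda>_. PI)(k := b))" and "b \<in> {PX, PY}"
  shows "fold conj_gate (normalize_ZX k P Q) P = pauli_at PX k"
    and "fold conj_gate (normalize_ZX k P Q) Q = pauli_at PZ k"
proof -
  have pow: "(f ^^ 2) x = f (f x)" "(f ^^ 3) x = f (f (f x))" for f :: "'a \<Rightarrow> 'a" and x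
    by (simp_all add: numeral_2_eq_2 numeral_3_eq_3)
  show "fold conj_gate (normalize_ZX k P Q) P = pauli_at PX k"
    and "fold conj_gate (normalize_ZX k P Q) Q = pauli_at PZ k"
    using assms by (cases s; cases t; auto simp: normalize_ZX_def pauli_at_def pow intro!: pstring.expand)+
qed

definition fix_qubit :: "nat \<Rightarrow> pstring \<Rightarrow> pstring \<Rightarrow> gate list" where
  "fix_qubit k P Q =
     (let G = to_Z k (letter P k) in G @ normalize_ZX k (fold conj_gate G P) (fold conj_gate G Q))"

lemma fix_qubit_lnn_within: "g \<in> set (fix_qubit k P Q) \<Longrightarrow> lnn_within k (Suc k) g"
  unfolding fix_qubit_def normalize_ZX_def Let_def
  by (auto simp: lnn_within_def dest!: to_Z_lnn_within)

lemma single_qubit_fold_conj: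
  "single_qubit k P \<Longrightarrow> (\<And>g. g \<in> set C \<Longrightarrow> lnn_within k (Suc k) g) \<Longrightarrow> single_qubit k (fold conj_gate C P)"
  unfolding single_qubit_def by (metis letter_fold_conj_outside nat_neq_iff Suc_le_eq)

lemma fix_qubit_result:
  assumes "single_qubit k P" and "single_qubit k Q" and "anticommute (letter P k) (letter Q k)"
  shows "fold conj_gate (fix_qubit k P Q) P = pauli_at PX k"
    and "fold conj_gate (fix_qubit k P Q) Q = pauli_at PZ k"
proof -
  define G where "G = to_Z k (letter P k)"
  have "single_qubit k (fold conj_gate G P)" "single_qubit k (fold conj_gate G Q)"
    using assms(1,2) by (auto simp: G_def intro: single_qubit_fold_conj dest: to_Z_lnn_within)
  then have "fold conj_gate G P = PStr (neg (fold conj_gate G P)) ((\<lambda>_. PI)(k := PZ))"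
    and "fold conj_gate G Q = PStr (neg (fold conj_gate G Q)) ((\<lambda>_. PI)(k := letter (fold conj_gate G Q) k))"
    using single_qubit_eq to_Z_result(1)[OF assms(3)] unfolding G_def by metis+
  note ZX = normalize_ZX_result[OF this to_Z_result(2)[OF assms(3), folded G_def]]
  show "fold conj_gate (fix_qubit k P Q) P = pauli_at PX k" "fold conj_gate (fix_qubit k P Q) Q = pauli_at PZ k"
    using ZX by (simp_all add: fix_qubit_def G_def[symmetric])
qed

lemma sweep_single_qubit:
  assumes "\<forall>q<lo. letter P q = PI" and "\<forall>q > lo + m. letter P q = PI"
  shows "single_qubit lo (fold conj_gate (sweep lo m P) P)"
  unfolding single_qubit_def
proof (intro allI impI)
  fix q assume "q \<noteq> lo"
  then consider "q < lo" | "lo < q"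
    by arith
  then show "letter (fold conj_gate (sweep lo m P) P) q = PI"
  proof cases
    case 1
    then show ?thesis
      using assms(1) letter_fold_conj_outside[of "sweep lo m P" lo "Suc (lo + m)"] sweep_lnn_within by auto
  qed (use assms(2) sweep_clears in auto)
qed

lemma merge_pair_single_qubit:
  assumes P: "single_qubit k P" and Q: "\<forall>q. q \<noteq> k \<longrightarrow> q \<noteq> Suc k \<longrightarrow> letter Q q = PI"
    and anti: "anticommute (letter P k) (letter Q k)"
  shows "single_qubit k (fold conj_gate (merge_pair k P Q) P)"
    and "single_qubit k (fold conj_gate (merge_pair k P Q) Q)"
proof -
  have unchanged: "letter (fold conj_gate (merge_pair k P Q) R) q = letter R q"
    if "q \<noteq> k" "q \<noteq> Suc k" for R q
  proof -
    have "q < k \<or> Suc (Suc k) \<le> q"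
      using that by arith
    then show ?thesis
      using merge_pair_lnn_within letter_fold_conj_outside[of "merge_pair k P Q" k "Suc (Suc k)" q R] by blast
  qed
  have P_upper: "letter P (Suc k) = PI"
    using P by (simp add: single_qubit_def)
  show "single_qubit k (fold conj_gate (merge_pair k P Q) P)"
    using P merge_pair_clears(1)[OF anti P_upper] unchanged
    unfolding single_qubit_def by (metis (no_types, lifting))
  show "single_qubit k (fold conj_gate (merge_pair k P Q) Q)"
    using Q merge_pair_clears(2)[OF anti P_upper] unchanged
    unfolding single_qubit_def by (metis (no_types, lifting))
qed

definition double_sweep :: "nat \<Rightarrow> nat \<Rightarrow> pstring \<Rightarrow> pstring \<Rightarrow> gate list" where
  "double_sweep n k P Q =
     (let S = sweep k (n - 1 - k) P in S @ sweep (Suc k) (n - 2 - k) (fold conj_gate S Q))"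

lemma double_sweep_result:
  assumes "Suc k < n" and "supported n P" and "supported n Q"
    and low: "\<forall>j<k. letter P j = PI \<and> letter Q j = PI"
  shows "single_qubit k (fold conj_gate (double_sweep n k P Q) P)"
    and "\<forall>q. q \<noteq> k \<longrightarrow> q \<noteq> Suc k \<longrightarrow> letter (fold conj_gate (double_sweep n k P Q) Q) q = PI"
proof -
  define S1 where "S1 = sweep k (n - 1 - k) P"
  define S2 where "S2 = sweep (Suc k) (n - 2 - k) (fold conj_gate S1 Q)"
  have S: "double_sweep n k P Q = S1 @ S2"
    by (simp add: double_sweep_def S1_def S2_def Let_def)
  have top: "Suc (k + (n - 1 - k)) = n" "Suc (Suc k + (n - 2 - k)) = n"
    using assms(1) by arith+
  have S1: "lnn_within k n g" if "g \<in> set S1" for g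
    using that sweep_lnn_within[of g k "n - 1 - k"] top(1) unfolding S1_def by metis
  have S2: "lnn_within (Suc k) n g" if "g \<in> set S2" for g
    using that sweep_lnn_within[of g "Suc k" "n - 2 - k"] top(2) unfolding S2_def by metis
  have P1: "single_qubit k (fold conj_gate S1 P)"
    unfolding S1_def using low \<open>supported n P\<close> top by (intro sweep_single_qubit) (auto simp: supported_def)
  moreover have "fold conj_gate S2 (fold conj_gate S1 P) = fold conj_gate S1 P"
    using P1 S2 by (intro fold_conj_trivial) (fastforce simp: single_qubit_def lnn_within_def)
  ultimately show "single_qubit k (fold conj_gate (double_sweep n k P Q) P)"
    by (simp add: S)
  have "supported n (fold conj_gate S1 Q)"
    using \<open>supported n Q\<close> S1 by (intro supported_fold_conj lnn_within_circ_wf[of S1 k n]) auto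
  then have high: "\<forall>q > Suc k + (n - 2 - k). letter (fold conj_gate S1 Q) q = PI"
    using top by (simp add: supported_def)
  show "\<forall>q. q \<noteq> k \<longrightarrow> q \<noteq> Suc k \<longrightarrow> letter (fold conj_gate (double_sweep n k P Q) Q) q = PI"
  proof (intro allI impI)
    fix q assume "q \<noteq> k" "q \<noteq> Suc k"
    show "letter (fold conj_gate (double_sweep n k P Q) Q) q = PI"
    proof (cases "q < k")
      case True
      then show ?thesis
        using low letter_fold_conj_outside[of S1 k n] letter_fold_conj_outside[of S2 "Suc k" n] S1 S2
        by (simp add: S)
    next
      case False
      then show ?thesis
        using \<open>q \<noteq> k\<close> \<open>q \<noteq> Suc k\<close> high sweep_clears by (simp add: S S2_def)
    qed
  qed
qed

lemma double_sweep_lnn_within: "Suc k < n \<Longrightarrow> g \<in> set (double_sweep n k P Q) \<Longrightarrow> lnn_within k n g"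
proof -
  assume "Suc k < n" and "g \<in> set (double_sweep n k P Q)"
  moreover have "Suc (k + (n - 1 - k)) = n" "Suc (Suc k + (n - 2 - k)) = n"
    using \<open>Suc k < n\<close> by arith+
  ultimately show ?thesis
    unfolding double_sweep_def Let_def by (auto dest!: sweep_lnn_within elim!: lnn_within_mono)
qed

definition reduce_to_qubit :: "nat \<Rightarrow> nat \<Rightarrow> pstring \<Rightarrow> pstring \<Rightarrow> gate list" where
  "reduce_to_qubit n k P Q =
     (let S = double_sweep n k P Q in S @ merge_pair k (fold conj_gate S P) (fold conj_gate S Q))"

lemma reduce_to_qubit_lnn_within:
  assumes "Suc k < n" and "g \<in> set (reduce_to_qubit n k P Q)"
  shows "lnn_within k n g"
proof -
  have "lnn_within k n g" if "lnn_within k (Suc (Suc k)) g"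
    using that by (rule lnn_within_mono) (use assms(1) in simp_all)
  then show ?thesis
    using assms unfolding reduce_to_qubit_def Let_def
    by (auto dest: double_sweep_lnn_within merge_pair_lnn_within)
qed

lemma reduce_to_qubit_result:
  assumes "Suc k < n" and "supported n P" and "supported n Q"
    and "\<forall>j<k. letter P j = PI \<and> letter Q j = PI" and "pstr_anticomm n P Q"
  shows "single_qubit k (fold conj_gate (reduce_to_qubit n k P Q) P)"
    and "single_qubit k (fold conj_gate (reduce_to_qubit n k P Q) Q)"
proof -
  define S where "S = double_sweep n k P Q"
  note P' = double_sweep_result(1)[OF assms(1-4), folded S_def]
  note Q' = double_sweep_result(2)[OF assms(1-4), folded S_def]
  have "circ_wf n S"
    using double_sweep_lnn_within[OF assms(1)] by (intro lnn_within_circ_wf[of S k n]) (auto simp: S_def)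
  then have "pstr_anticomm n (fold conj_gate S P) (fold conj_gate S Q)"
    using assms(5) by (simp add: pstr_anticomm_fold_conj)
  then have "anticommute (letter (fold conj_gate S P) k) (letter (fold conj_gate S Q) k)"
    using pstr_anticomm_single_qubit[OF _ P'] assms(1) by simp
  note merged = merge_pair_single_qubit[OF P' Q' this]
  show "single_qubit k (fold conj_gate (reduce_to_qubit n k P Q) P)"
    and "single_qubit k (fold conj_gate (reduce_to_qubit n k P Q) Q)"
    using merged by (simp_all add: reduce_to_qubit_def S_def[symmetric] Let_def)
qed

definition stage :: "nat \<Rightarrow> nat \<Rightarrow> pstring \<Rightarrow> pstring \<Rightarrow> gate list" where
  "stage n k P Q =
     (let R = (if Suc k < n then reduce_to_qubit n k P Q else [])
      in R @ fix_qubit k (fold conj_gate R P) (fold conj_gate R Q))"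

lemma stage_lnn_within:
  assumes "k < n" and "g \<in> set (stage n k P Q)"
  shows "lnn_within k n g"
proof -
  have "lnn_within k n g" if "g \<in> set (fix_qubit k P' Q')" for P' Q'
    using fix_qubit_lnn_within[OF that] by (rule lnn_within_mono) (use \<open>k < n\<close> in auto)
  then show ?thesis
    using assms unfolding stage_def Let_def by (auto split: if_splits dest: reduce_to_qubit_lnn_within)
qed

lemma stage_result:
  assumes "k < n" and "supported n P" and "supported n Q"
    and low: "\<forall>j<k. letter P j = PI \<and> letter Q j = PI" and "pstr_anticomm n P Q"
  shows "fold conj_gate (stage n k P Q) P = pauli_at PX k"
    and "fold conj_gate (stage n k P Q) Q = pauli_at PZ k"
proof -
  define R where "R = (if Suc k < n then reduce_to_qubit n k P Q else [])"
  have single: "single_qubit k (fold conj_gate R P) \<and> single_qubit k (fold conj_gate R Q)"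
  proof (cases "Suc k < n")
    case True
    then show ?thesis
      using reduce_to_qubit_result[OF True assms(2-5)] by (simp add: R_def)
  next
    case False
    then have "q < k \<or> n \<le> q" if "q \<noteq> k" for q
      using that by arith
    then show ?thesis
      using False low \<open>supported n P\<close> \<open>supported n Q\<close>
      by (auto simp: R_def single_qubit_def supported_def not_less)
  qed
  have "circ_wf n R"
  proof (cases "Suc k < n")
    case True
    then have "lnn_within k n g" if "g \<in> set R" for g
      using that reduce_to_qubit_lnn_within by (simp add: R_def)
    then show ?thesis
      using lnn_within_circ_wf[of R k n n] by blast
  qed (simp add: R_def circ_wf_def)
  then have "anticommute (letter (fold conj_gate R P) k) (letter (fold conj_gate R Q) k)"
    using single \<open>pstr_anticomm n P Q\<close> \<open>k < n\<close>
    by (simp add: pstr_anticomm_fold_conj flip: pstr_anticomm_single_qubit)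
  then show "fold conj_gate (stage n k P Q) P = pauli_at PX k"
    and "fold conj_gate (stage n k P Q) Q = pauli_at PZ k"
    using fix_qubit_result single by (simp_all add: stage_def R_def[symmetric] Let_def)
qed

lemma pstr_anticomm_pauli_at: "j < n \<Longrightarrow> pstr_anticomm n (pauli_at a j) P = anticommute a (letter P j)"
  by (simp add: pstr_anticomm_single_qubit single_qubit_pauli_at) (simp add: pauli_at_def)

lemma letter_fold_conj_fixed_qubit:
  assumes "circ_wf n C" and "j < n"
    and X: "fold conj_gate C (pauli_at PX j) = pauli_at PX j"
    and Z: "fold conj_gate C (pauli_at PZ j) = pauli_at PZ j"
    and "letter R j = PI"
  shows "letter (fold conj_gate C R) j = PI"
proof -
  have "anticommute a (letter (fold conj_gate C R) j) = anticommute a (letter R j)"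
    if "fold conj_gate C (pauli_at a j) = pauli_at a j" for a
    using pstr_anticomm_fold_conj[OF assms(1), of "pauli_at a j" R] that
    by (simp add: pstr_anticomm_pauli_at[OF \<open>j < n\<close>])
  from this[OF X] this[OF Z] \<open>letter R j = PI\<close> show ?thesis
    by (cases "letter (fold conj_gate C R) j") (simp_all add: anticommute_def)
qed

fun synth :: "nat \<Rightarrow> gate list \<Rightarrow> nat \<Rightarrow> gate list" where
  "synth n C 0 = []"
| "synth n C (Suc k) =
     (let D = synth n C k
      in D @ stage n k (fold conj_gate (C @ D) (pauli_at PX k)) (fold conj_gate (C @ D) (pauli_at PZ k)))"

lemma synth_lnn_within: "k \<le> n \<Longrightarrow> g \<in> set (synth n C k) \<Longrightarrow> lnn_within 0 n g"
proof (induction k)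
  case (Suc k)
  have "lnn_within 0 n g" if "lnn_within k n g"
    using that by (rule lnn_within_mono) simp_all
  with Suc stage_lnn_within[of k n g] show ?case
    by (auto simp: Let_def)
qed simp

lemma synth_fixes_paulis:
  assumes "circ_wf n C" and "k \<le> n"
  shows "\<forall>j<k. fold conj_gate (C @ synth n C k) (pauli_at PX j) = pauli_at PX j
              \<and> fold conj_gate (C @ synth n C k) (pauli_at PZ j) = pauli_at PZ j"
  using assms(2)
proof (induction k)
  case (Suc k)
  define W where "W = C @ synth n C k"
  define P where "P = fold conj_gate W (pauli_at PX k)"
  define Q where "Q = fold conj_gate W (pauli_at PZ k)"
  have "k < n"
    using Suc.prems by simp
  have IH: "\<forall>j<k. fold conj_gate W (pauli_at PX j) = pauli_at PX j \<and> fold conj_gate W (pauli_at PZ j) = pauli_at PZ j"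
    using Suc by (simp add: W_def)
  have wf: "circ_wf n W"
    using assms(1) synth_lnn_within[of k n] \<open>k < n\<close> lnn_within_gate_wf
    by (fastforce simp: W_def circ_wf_def)
  have supp: "supported n P" "supported n Q"
    using supported_fold_conj[OF wf] \<open>k < n\<close> by (simp_all add: P_def Q_def supported_def pauli_at_def)
  have low: "\<forall>j<k. letter P j = PI \<and> letter Q j = PI"
    using IH \<open>k < n\<close>
    by (auto simp: P_def Q_def pauli_at_def intro!: letter_fold_conj_fixed_qubit[OF wf])
  have "pstr_anticomm n P Q"
    using \<open>k < n\<close> by (simp add: P_def Q_def pstr_anticomm_fold_conj[OF wf] pstr_anticomm_pauli_at)
      (simp add: pauli_at_def anticommute_def)
  note result = stage_result[OF \<open>k < n\<close> supp low this]
  have step: "C @ synth n C (Suc k) = W @ stage n k P Q"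
    by (simp add: W_def P_def Q_def Let_def)
  have untouched: "fold conj_gate (stage n k P Q) (pauli_at a j) = pauli_at a j" if "j < k" for a j
    using that stage_lnn_within[OF \<open>k < n\<close>]
    by (intro fold_conj_trivial) (fastforce simp: lnn_within_def pauli_at_def)
  show ?case
    using result untouched IH unfolding step fold_append comp_apply
    by (auto simp: P_def Q_def less_Suc_eq)
qed simp

section \<open>Two-qubit depth\<close>

(* Pairs are stored sorted, so that CNOTs in both directions on the same two qubits agree. *)
fun gate_pair :: "gate \<Rightarrow> (nat \<times> nat) list" where
  "gate_pair (CNOT a b) = [(min a b, max a b)]"
| "gate_pair (CZ a b) = [(min a b, max a b)]"
| "gate_pair (Hgate q) = []"
| "gate_pair (Pgate q k) = []"

definition two_qubit_pairs :: "gate list \<Rightarrow> (nat \<times> nat) list" where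
  "two_qubit_pairs C = concat (map gate_pair C)"

lemma two_qubit_pairs_simps [simp]:
  "two_qubit_pairs [] = []"
  "two_qubit_pairs (g # C) = gate_pair g @ two_qubit_pairs C"
  "two_qubit_pairs (C @ D) = two_qubit_pairs C @ two_qubit_pairs D"
  by (simp_all add: two_qubit_pairs_def)

fun asap :: "(nat \<Rightarrow> nat) \<times> nat \<Rightarrow> (nat \<times> nat) list \<Rightarrow> (nat \<Rightarrow> nat) \<times> nat" where
  "asap s [] = s"
| "asap (t, d) ((a, b) # ps) = (let l = max (t a) (t b) + 1 in asap (t(a := l, b := l), max d l) ps)"

lemma asap_append: "asap s (ps @ qs) = asap (asap s ps) qs"
  by (induction s ps rule: asap.induct) (simp_all add: Let_def)

lemma asap_Cons_sorted: "asap s ((min a b, max a b) # ps) = asap s ((a, b) # ps)"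
proof (cases s)
  case (Pair t d)
  then show ?thesis
    by (cases "a \<le> b") (simp_all add: Let_def max.commute fun_upd_twist)
qed

lemma tq_depth_aux_asap: "tq_depth_aux t d C = snd (asap (t, d) (two_qubit_pairs C))"
  by (induction t d C rule: tq_depth_aux.induct) (simp_all add: asap_Cons_sorted Let_def fun_upd_def)

fun ladder :: "nat \<Rightarrow> nat \<Rightarrow> (nat \<times> nat) list" where
  "ladder lo 0 = []"
| "ladder lo (Suc m) = [(lo + m, Suc (lo + m)), (lo + m, Suc (lo + m))] @ ladder lo m"

lemma ladder_Suc_lo: "ladder (Suc lo) m @ [(lo, Suc lo), (lo, Suc lo)] = ladder lo (Suc m)"
  by (induction m) simp_all

lemma two_qubit_pairs_to_Z [simp]: "two_qubit_pairs (to_Z q a) = []"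
  by (cases a) (simp_all add: to_Z_def)

lemma two_qubit_pairs_to_X [simp]: "two_qubit_pairs (to_X q a) = []"
  by (cases a) (simp_all add: to_X_def)

lemma two_qubit_pairs_sweep: "two_qubit_pairs (sweep lo m P) = ladder lo m"
  by (induction m arbitrary: P) (simp_all add: Let_def clear_upper_def)

lemma two_qubit_pairs_single_qubit: "(\<And>g. g \<in> set C \<Longrightarrow> lnn_within k (Suc k) g) \<Longrightarrow> two_qubit_pairs C = []"
proof (induction C)
  case (Cons g C)
  then have "lnn_within k (Suc k) g"
    by simp
  then have "gate_pair g = []"
    by (cases g) (auto simp: lnn_within_def)
  with Cons show ?case
    by simp
qed simp

lemma two_qubit_pairs_double_sweep:
  "two_qubit_pairs (double_sweep n k P Q) = ladder k (n - 1 - k) @ ladder (Suc k) (n - 2 - k)"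
  by (simp add: double_sweep_def Let_def two_qubit_pairs_sweep)

lemma two_qubit_pairs_merge_pair: "two_qubit_pairs (merge_pair k P Q) = [(k, Suc k), (k, Suc k)]"
  by (simp add: merge_pair_def Let_def)

lemma two_qubit_pairs_stage:
  "two_qubit_pairs (stage n k P Q) = (if Suc k < n then ladder k (n - 1 - k) @ ladder k (n - 1 - k) else [])"
proof -
  have fix_pairs: "two_qubit_pairs (fix_qubit k P' Q') = []" for P' Q'
    by (rule two_qubit_pairs_single_qubit) (rule fix_qubit_lnn_within)
  have "two_qubit_pairs (stage n k P Q) =
          (if Suc k < n then ladder k (n - 1 - k) @ ladder (Suc k) (n - 2 - k) @ [(k, Suc k), (k, Suc k)] else [])"
    by (simp only: stage_def reduce_to_qubit_def Let_def two_qubit_pairs_simps two_qubit_pairs_double_sweep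
        two_qubit_pairs_merge_pair fix_pairs append_Nil2 append_assoc if_distrib[where f = two_qubit_pairs])
  moreover have "n - 1 - k = Suc (n - 2 - k)" if "Suc k < n"
    using that by arith
  ultimately show ?thesis
    by (simp add: ladder_Suc_lo del: ladder.simps)
qed

fun synth_pairs :: "nat \<Rightarrow> nat \<Rightarrow> (nat \<times> nat) list" where
  "synth_pairs n 0 = []"
| "synth_pairs n (Suc k) = synth_pairs n k @ (if Suc k < n then ladder k (n - 1 - k) @ ladder k (n - 1 - k) else [])"

lemma two_qubit_pairs_synth: "two_qubit_pairs (synth n C k) = synth_pairs n k"
  by (induction k) (simp_all add: Let_def two_qubit_pairs_stage)

lemma asap_ladder_outside: "j < lo \<or> lo + m < j \<Longrightarrow> fst (asap s (ladder lo m)) j = fst s j"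
proof (induction m arbitrary: s)
  case (Suc m)
  then have "j < lo \<or> lo + m < j"
    by arith
  then show ?case
    using Suc.prems by (cases s) (auto simp: Suc.IH Let_def)
qed simp

(* The profile t j + 2 j \<le> c slopes down towards the top qubit, where the ladder starts, so its
   links overlap in time: one pass raises the profile by 4 independently of its length. *)
lemma asap_ladder:
  assumes "\<forall>j. lo \<le> j \<and> j < lo + m \<longrightarrow> fst s j + 2 * j \<le> c"
    and "fst s (lo + m) + 2 * (lo + m) \<le> c + 2" and "snd s \<le> c + 4"
  shows "(\<forall>j. lo \<le> j \<and> j \<le> lo + m \<longrightarrow> fst (asap s (ladder lo m)) j + 2 * j \<le> c + 4)
         \<and> snd (asap s (ladder lo m)) \<le> c + 4"
  using assms
proof (induction m arbitrary: s)
  case 0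
  then show ?case
    by auto
next
  case (Suc m)
  obtain t d where s: "s = (t, d)"
    by fastforce
  define L where "L = max (t (lo + m)) (t (Suc (lo + m))) + 2"
  define s1 where "s1 = (t(lo + m := L, Suc (lo + m) := L), max d L)"
  have L: "L + 2 * (lo + m) \<le> c + 2"
    using Suc.prems(1)[rule_format, of "lo + m"] Suc.prems(2) by (simp add: s L_def)
  have first: "asap s (ladder lo (Suc m)) = asap s1 (ladder lo m)"
    by (simp add: s s1_def L_def Let_def max_def)
  have "\<forall>j. lo \<le> j \<and> j < lo + m \<longrightarrow> fst s1 j + 2 * j \<le> c"
    "fst s1 (lo + m) + 2 * (lo + m) \<le> c + 2" "snd s1 \<le> c + 4"
    using Suc.prems L by (auto simp: s s1_def)
  note IH = Suc.IH[OF this]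
  have "fst (asap s1 (ladder lo m)) (Suc (lo + m)) = L"
    by (simp add: asap_ladder_outside s1_def)
  then show ?case
    unfolding first using IH L by (auto simp: le_Suc_eq)
qed

lemma asap_ladder_twice:
  assumes "\<forall>j. lo \<le> j \<and> j \<le> lo + m \<longrightarrow> fst s j + 2 * j \<le> c" and "snd s \<le> c"
  shows "(\<forall>j. lo \<le> j \<and> j \<le> lo + m \<longrightarrow> fst (asap s (ladder lo m @ ladder lo m)) j + 2 * j \<le> c + 8)
         \<and> snd (asap s (ladder lo m @ ladder lo m)) \<le> c + 8"
proof -
  define s1 where "s1 = asap s (ladder lo m)"
  have first: "(\<forall>j. lo \<le> j \<and> j \<le> lo + m \<longrightarrow> fst s1 j + 2 * j \<le> c + 4) \<and> snd s1 \<le> c + 4"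
    unfolding s1_def using assms assms(1)[rule_format, of "lo + m"] by (intro asap_ladder) auto
  have "(\<forall>j. lo \<le> j \<and> j \<le> lo + m \<longrightarrow> fst (asap s1 (ladder lo m)) j + 2 * j \<le> (c + 4) + 4)
             \<and> snd (asap s1 (ladder lo m)) \<le> (c + 4) + 4"
    using first first[THEN conjunct1, rule_format, of "lo + m"] by (intro asap_ladder) auto
  then show ?thesis
    by (simp add: s1_def asap_append ac_simps)
qed

lemma asap_synth_pairs:
  assumes "k < n"
  shows "(\<forall>j. k \<le> j \<and> j < n \<longrightarrow> fst (asap (\<lambda>_. 0, 0) (synth_pairs n k)) j + 2 * j \<le> 8 * k + 2 * (n - 1))
         \<and> snd (asap (\<lambda>_. 0, 0) (synth_pairs n k)) \<le> 8 * k + 2 * (n - 1)"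
  using assms
proof (induction k)
  case (Suc k)
  define s where "s = asap (\<lambda>_. 0, 0) (synth_pairs n k)"
  define m where "m = n - 1 - k"
  have top: "j \<le> k + m \<longleftrightarrow> j < n" for j
    using Suc.prems by (auto simp: m_def)
  have "(\<forall>j. k \<le> j \<and> j \<le> k + m \<longrightarrow> fst s j + 2 * j \<le> 8 * k + 2 * (n - 1))
        \<and> snd s \<le> 8 * k + 2 * (n - 1)"
    using Suc by (simp add: s_def top)
  then have "(\<forall>j. k \<le> j \<and> j \<le> k + m \<longrightarrow> fst (asap s (ladder k m @ ladder k m)) j + 2 * j \<le> 8 * k + 2 * (n - 1) + 8)
             \<and> snd (asap s (ladder k m @ ladder k m)) \<le> 8 * k + 2 * (n - 1) + 8"
    by (intro asap_ladder_twice) auto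
  moreover have "asap (\<lambda>_. 0, 0) (synth_pairs n (Suc k)) = asap s (ladder k m @ ladder k m)"
    using Suc.prems by (simp add: s_def m_def asap_append)
  ultimately show ?case
    by (auto simp: top intro: Suc_leD)
qed auto

lemma two_qubit_depth_synth:
  assumes "1 \<le> n"
  shows "two_qubit_depth (synth n C n) \<le> 10 * (n - 1)"
proof -
  have "synth_pairs n n = synth_pairs n (n - 1)"
    using assms by (cases n) simp_all
  then show ?thesis
    using asap_synth_pairs[of "n - 1" n] assms
    by (simp add: two_qubit_depth_def tq_depth_aux_asap two_qubit_pairs_synth)
qed

section \<open>Operators acting on the first n qubits\<close>

definition configs :: "nat \<Rightarrow> (nat \<Rightarrow> bool) set" where
  "configs n = {b. \<forall>q\<ge>n. \<not> b q}"

definition trunc :: "nat \<Rightarrow> (nat \<Rightarrow> bool) \<Rightarrow> nat \<Rightarrow> bool" where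
  "trunc n y = (\<lambda>q. q < n \<and> y q)"

definition patch :: "nat \<Rightarrow> (nat \<Rightarrow> bool) \<Rightarrow> (nat \<Rightarrow> bool) \<Rightarrow> nat \<Rightarrow> bool" where
  "patch n b y = (\<lambda>q. if q < n then b q else y q)"

lemma finite_configs: "finite (configs n)"
proof -
  have "configs n \<subseteq> (\<lambda>S q. q \<in> S) ` Pow {..<n}"
  proof
    fix b assume "b \<in> configs n"
    then have "b = (\<lambda>q. q \<in> {q. b q})" "{q. b q} \<in> Pow {..<n}"
      by (auto simp: configs_def not_le[symmetric])
    then show "b \<in> (\<lambda>S q. q \<in> S) ` Pow {..<n}"
      by blast
  qed
  then show ?thesis
    by (rule finite_subset) simp
qed

lemma trunc_in_configs [simp]: "trunc n y \<in> configs n"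
  by (simp add: trunc_def configs_def)

lemma patch_trunc [simp]: "patch n (trunc n y) y = y"
  by (auto simp: patch_def trunc_def fun_eq_iff)

lemma trunc_patch [simp]: "b \<in> configs n \<Longrightarrow> trunc n (patch n b y) = b"
  by (auto simp: patch_def trunc_def fun_eq_iff configs_def)

lemma patch_patch [simp]: "patch n b' (patch n b y) = patch n b' y"
  by (auto simp: patch_def fun_eq_iff)

lemma patch_configs: "a \<in> configs n \<Longrightarrow> b \<in> configs n \<Longrightarrow> patch n b a = b"
  by (auto simp: patch_def configs_def fun_eq_iff)

lemma trunc_configs: "a \<in> configs n \<Longrightarrow> trunc n a = a"
  by (auto simp: trunc_def configs_def fun_eq_iff) (meson not_less)

lemma patch_upd: "q < n \<Longrightarrow> (patch n b y)(q := v) = patch n (b(q := v)) y"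
  by (auto simp: patch_def fun_eq_iff)

lemma patch_at: "q < n \<Longrightarrow> patch n b y q = b q"
  by (simp add: patch_def)

lemma trunc_at: "q < n \<Longrightarrow> trunc n y q = y q"
  by (simp add: trunc_def)

lemma configs_upd: "b \<in> configs n \<Longrightarrow> q < n \<Longrightarrow> b(q := v) \<in> configs n"
  by (auto simp: configs_def)

definition acts_below :: "nat \<Rightarrow> (state \<Rightarrow> state) \<Rightarrow> bool" where
  "acts_below n W \<longleftrightarrow>
     (\<exists>M. \<forall>\<psi> y. W \<psi> y = (\<Sum>b\<in>configs n. M (trunc n y) b * \<psi> (patch n b y)))"

lemma acts_below_monomial:
  assumes "\<And>a. a \<in> configs n \<Longrightarrow> f a \<in> configs n"
    and "\<And>\<psi> y. W \<psi> y = c (trunc n y) * \<psi> (patch n (f (trunc n y)) y)"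
  shows "acts_below n W"
  unfolding acts_below_def
proof (intro exI allI)
  fix \<psi> y
  have "(\<Sum>b\<in>configs n. (if b = f (trunc n y) then c (trunc n y) else 0) * \<psi> (patch n b y))
       = (\<Sum>b\<in>configs n. if b = f (trunc n y) then c (trunc n y) * \<psi> (patch n b y) else 0)"
    by (rule sum.cong) auto
  also have "\<dots> = W \<psi> y"
    using assms finite_configs by (simp add: sum.delta)
  finally show "W \<psi> y = (\<Sum>b\<in>configs n. (\<lambda>a b. if b = f a then c a else 0) (trunc n y) b * \<psi> (patch n b y))"
    by simp
qed

lemma acts_below_add:
  assumes "acts_below n W1" and "acts_below n W2"
  shows "acts_below n (\<lambda>\<psi> y. W1 \<psi> y + W2 \<psi> y)"
proof -
  obtain M1 where M1: "\<forall>\<psi> y. W1 \<psi> y = (\<Sum>b\<in>configs n. M1 (trunc n y) b * \<psi> (patch n b y))"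
    using assms(1) unfolding acts_below_def by blast
  obtain M2 where M2: "\<forall>\<psi> y. W2 \<psi> y = (\<Sum>b\<in>configs n. M2 (trunc n y) b * \<psi> (patch n b y))"
    using assms(2) unfolding acts_below_def by blast
  show ?thesis
    unfolding acts_below_def
    by (rule exI[of _ "\<lambda>a b. M1 a b + M2 a b"]) (simp add: M1 M2 distrib_right sum.distrib)
qed

lemma acts_below_comp:
  assumes "acts_below n W1" and "acts_below n W2"
  shows "acts_below n (\<lambda>\<psi>. W2 (W1 \<psi>))"
proof -
  obtain M1 where M1: "\<forall>\<psi> y. W1 \<psi> y = (\<Sum>b\<in>configs n. M1 (trunc n y) b * \<psi> (patch n b y))"
    using assms(1) unfolding acts_below_def by blast
  obtain M2 where M2: "\<forall>\<psi> y. W2 \<psi> y = (\<Sum>b\<in>configs n. M2 (trunc n y) b * \<psi> (patch n b y))"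
    using assms(2) unfolding acts_below_def by blast
  have "W2 (W1 \<psi>) y = (\<Sum>b'\<in>configs n. (\<Sum>b\<in>configs n. M2 (trunc n y) b * M1 b b') * \<psi> (patch n b' y))"
    for \<psi> y
  proof -
    have "W2 (W1 \<psi>) y = (\<Sum>b\<in>configs n. M2 (trunc n y) b * (\<Sum>b'\<in>configs n. M1 b b' * \<psi> (patch n b' y)))"
      using M1 M2 by (simp cong: sum.cong)
    also have "\<dots> = (\<Sum>b\<in>configs n. \<Sum>b'\<in>configs n. M2 (trunc n y) b * M1 b b' * \<psi> (patch n b' y))"
      by (simp add: sum_distrib_left mult.assoc)
    also have "\<dots> = (\<Sum>b'\<in>configs n. \<Sum>b\<in>configs n. M2 (trunc n y) b * M1 b b' * \<psi> (patch n b' y))"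
      by (rule sum.swap)
    also have "\<dots> = (\<Sum>b'\<in>configs n. (\<Sum>b\<in>configs n. M2 (trunc n y) b * M1 b b') * \<psi> (patch n b' y))"
      by (simp add: sum_distrib_right)
    finally show ?thesis .
  qed
  then show ?thesis
    unfolding acts_below_def by (intro exI[of _ "\<lambda>a b'. \<Sum>b\<in>configs n. M2 a b * M1 b b'"]) simp
qed

lemma acts_below_gate: "gate_wf n g \<Longrightarrow> acts_below n (gate_sem g)"
proof (induction g)
  case (Hgate q)
  let ?r = "1 / complex_of_real (sqrt 2)"
  have "acts_below n (\<lambda>\<psi> y. ?r * \<psi> (patch n ((trunc n y)(q := False)) y))"
    using Hgate by (intro acts_below_monomial[where f = "\<lambda>a. a(q := False)" and c = "\<lambda>_. ?r"])
      (auto intro: configs_upd)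
  moreover have "acts_below n (\<lambda>\<psi> y. ((if trunc n y q then -1 else 1) * ?r) * \<psi> (patch n ((trunc n y)(q := True)) y))"
    using Hgate by (intro acts_below_monomial[where f = "\<lambda>a. a(q := True)" and c = "\<lambda>a. (if a q then -1 else 1) * ?r"])
      (auto intro: configs_upd)
  moreover have "gate_sem (Hgate q) = (\<lambda>\<psi> y. ?r * \<psi> (patch n ((trunc n y)(q := False)) y) +
      ((if trunc n y q then -1 else 1) * ?r) * \<psi> (patch n ((trunc n y)(q := True)) y))"
    using Hgate by (auto simp: fun_eq_iff patch_upd[symmetric] trunc_at add_divide_distrib)
  ultimately show ?case
    using acts_below_add by simp
next
  case (Pgate q k)
  then show ?case
    by (intro acts_below_monomial[where f = "\<lambda>a. a" and c = "\<lambda>a. if a q then \<i> ^ k else 1"]) (auto simp: trunc_at)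
next
  case (CNOT c t)
  then show ?case
    by (intro acts_below_monomial[where f = "\<lambda>a. a(t := (a t \<noteq> a c))" and c = "\<lambda>_. 1"])
       (auto simp: trunc_at patch_upd[symmetric] intro: configs_upd)
next
  case (CZ a b)
  then show ?case
    by (intro acts_below_monomial[where f = "\<lambda>x. x" and c = "\<lambda>x. if x a \<and> x b then -1 else 1"]) (auto simp: trunc_at)
qed

lemma acts_below_circ: "circ_wf n C \<Longrightarrow> acts_below n (circ_sem C)"
proof (induction C)
  case Nil
  have "acts_below n (\<lambda>\<psi> y. 1 * \<psi> (patch n (trunc n y) y))"
    by (rule acts_below_monomial[where f = "\<lambda>a. a"]) auto
  then show ?case
    by (simp add: fun_eq_iff[symmetric])
next
  case (Cons g C)
  then have "acts_below n (\<lambda>\<psi>. circ_sem C (gate_sem g \<psi>))"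
    by (auto simp: circ_wf_def intro: acts_below_comp acts_below_gate)
  then show ?case
    by (simp add: fun_eq_iff[symmetric])
qed

definition block_norm :: "nat \<Rightarrow> (nat \<Rightarrow> bool) \<Rightarrow> state \<Rightarrow> real" where
  "block_norm n y \<psi> = (\<Sum>b\<in>configs n. (cmod (\<psi> (patch n b y)))\<^sup>2)"

lemma block_norm_monomial:
  assumes f: "\<And>a. a \<in> configs n \<Longrightarrow> f a \<in> configs n" "\<And>a. a \<in> configs n \<Longrightarrow> f (f a) = a"
    and c: "\<And>a. cmod (c a) = 1"
    and W: "\<And>\<psi> y. W \<psi> y = c (trunc n y) * \<psi> (patch n (f (trunc n y)) y)"
  shows "block_norm n y (W \<psi>) = block_norm n y \<psi>"
proof -
  have "block_norm n y (W \<psi>) = (\<Sum>b\<in>configs n. (cmod (\<psi> (patch n (f b) y)))\<^sup>2)"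
    unfolding block_norm_def by (rule sum.cong) (auto simp: W norm_mult c)
  also have "\<dots> = block_norm n y \<psi>"
    unfolding block_norm_def by (rule sum.reindex_bij_witness[where i = f and j = f]) (auto simp: f)
  finally show ?thesis .
qed

lemma sum_configs_pairs:
  assumes "q < n"
  shows "(\<Sum>b\<in>configs n. g b) = (\<Sum>b\<in>{b\<in>configs n. \<not> b q}. g b + g (b(q := True)))"
proof -
  let ?B0 = "{b\<in>configs n. \<not> b q}" and ?set = "\<lambda>b. b(q := True)"
  have split: "configs n = ?B0 \<union> ?set ` ?B0"
  proof (intro set_eqI iffI)
    fix b assume b: "b \<in> configs n"
    show "b \<in> ?B0 \<union> ?set ` ?B0"
    proof (cases "b q")
      case True
      then have "b = ?set (b(q := False))"
        by (auto simp: fun_eq_iff)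
      moreover have "b(q := False) \<in> ?B0"
        using b assms by (auto intro: configs_upd)
      ultimately show ?thesis
        by blast
    qed (use b in auto)
  qed (auto intro: configs_upd assms)
  have "inj_on ?set ?B0"
    by (rule inj_onI) (auto simp: fun_eq_iff split: if_splits)
  moreover have "?B0 \<inter> ?set ` ?B0 = {}"
    by auto
  ultimately have "(\<Sum>b\<in>configs n. g b) = (\<Sum>b\<in>?B0. g b) + (\<Sum>b\<in>?B0. g (?set b))"
    using finite_configs by (subst split, subst sum.union_disjoint) (auto simp: sum.reindex)
  then show ?thesis
    by (simp add: sum.distrib)
qed

lemma block_norm_Hgate:
  assumes "q < n"
  shows "block_norm n y (gate_sem (Hgate q) \<psi>) = block_norm n y \<psi>"
proof -
  let ?B0 = "{b\<in>configs n. \<not> b q}" and ?s = "complex_of_real (sqrt 2)"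
  let ?u = "\<lambda>b. \<psi> (patch n (b(q := False)) y)" and ?v = "\<lambda>b. \<psi> (patch n (b(q := True)) y)"
  have H: "gate_sem (Hgate q) \<psi> (patch n b y) = (?u b + (if b q then -1 else 1) * ?v b) / ?s" for b
    using assms by (simp add: patch_upd patch_at)
  have parallelogram: "(cmod ((u + v) / ?s))\<^sup>2 + (cmod ((u - v) / ?s))\<^sup>2 = (cmod u)\<^sup>2 + (cmod v)\<^sup>2" for u v
  proof -
    have "(cmod (u + v))\<^sup>2 + (cmod (u - v))\<^sup>2 = 2 * ((cmod u)\<^sup>2 + (cmod v)\<^sup>2)"
      unfolding cmod_power2 by (simp add: power2_eq_square algebra_simps)
    then show ?thesis
      by (simp add: norm_divide power_divide add_divide_distrib[symmetric])
  qed
  have "block_norm n y (gate_sem (Hgate q) \<psi>) =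
        (\<Sum>b\<in>?B0. (cmod ((?u b + ?v b) / ?s))\<^sup>2 + (cmod ((?u b - ?v b) / ?s))\<^sup>2)"
    unfolding block_norm_def sum_configs_pairs[OF assms] by (rule sum.cong) (auto simp del: gate_sem.simps simp: H)
  also have "\<dots> = (\<Sum>b\<in>?B0. (cmod (?u b))\<^sup>2 + (cmod (?v b))\<^sup>2)"
    by (simp only: parallelogram)
  also have "\<dots> = block_norm n y \<psi>"
    unfolding block_norm_def sum_configs_pairs[OF assms]
    by (rule sum.cong) (auto simp: fun_upd_idem)
  finally show ?thesis .
qed

lemma block_norm_gate: "gate_wf n g \<Longrightarrow> block_norm n y (gate_sem g \<psi>) = block_norm n y \<psi>"
proof (induction g)
  case (Hgate q)
  then show ?case
    by (simp del: gate_sem.simps add: block_norm_Hgate)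
next
  case (Pgate q k)
  then show ?case
    by (intro block_norm_monomial[where f = "\<lambda>a. a" and c = "\<lambda>a. if a q then \<i> ^ k else 1"])
       (auto simp: trunc_at norm_power)
next
  case (CNOT c t)
  then show ?case
    by (intro block_norm_monomial[where f = "\<lambda>a. a(t := (a t \<noteq> a c))" and c = "\<lambda>_. 1"])
       (auto simp: trunc_at patch_upd[symmetric] fun_eq_iff intro: configs_upd)
next
  case (CZ a b)
  then show ?case
    by (intro block_norm_monomial[where f = "\<lambda>x. x" and c = "\<lambda>x. if x a \<and> x b then -1 else 1"])
       (auto simp: trunc_at)
qed

lemma block_norm_circ: "circ_wf n C \<Longrightarrow> block_norm n y (circ_sem C \<psi>) = block_norm n y \<psi>"
  by (induction C arbitrary: \<psi>) (auto simp: circ_wf_def block_norm_gate)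

lemma matrix_basis_state:
  fixes W :: "state \<Rightarrow> state"
  assumes M: "\<And>\<psi> y. W \<psi> y = (\<Sum>b\<in>configs n. M (trunc n y) b * \<psi> (patch n b y))"
    and "a \<in> configs n" and "b \<in> configs n"
  shows "W (\<lambda>z. if z = b then c else 0) a = M a b * c"
proof -
  have "W (\<lambda>z. if z = b then c else 0) a = (\<Sum>b'\<in>configs n. if b' = b then M a b * c else 0)"
    unfolding M using assms(2,3) by (intro sum.cong) (auto simp: trunc_configs patch_configs)
  then show ?thesis
    using assms(3) finite_configs by simp
qed

lemma commuting_Z_off_diagonal:
  assumes M: "\<And>\<psi> y. W \<psi> y = (\<Sum>b\<in>configs n. M (trunc n y) b * \<psi> (patch n b y))"
    and Z: "\<And>q \<psi>. q < n \<Longrightarrow> W (pauli_on PZ q \<psi>) = pauli_on PZ q (W \<psi>)"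
    and a: "a \<in> configs n" and b: "b \<in> configs n" and "a \<noteq> b"
  shows "M a b = 0"
proof -
  obtain q where q: "a q \<noteq> b q"
    using \<open>a \<noteq> b\<close> by (auto simp: fun_eq_iff)
  then have "q < n"
    using a b by (auto simp: configs_def not_less[symmetric])
  let ?\<delta> = "\<lambda>c z. if z = b then c else (0::complex)"
  have "pauli_on PZ q (?\<delta> 1) = ?\<delta> (if b q then -1 else 1)"
    by (auto simp: pauli_on_def fun_eq_iff)
  then have "W (pauli_on PZ q (?\<delta> 1)) a = M a b * (if b q then -1 else 1)"
    using matrix_basis_state[OF M a b] by simp
  moreover have "pauli_on PZ q (W (?\<delta> 1)) a = (if a q then -1 else 1) * M a b"
    using matrix_basis_state[OF M a b, of 1] by (simp add: pauli_on_def)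
  ultimately have "M a b * (if b q then -1 else 1) = (if a q then -1 else 1) * M a b"
    using Z[OF \<open>q < n\<close>] by metis
  with q show ?thesis
    by (cases "a q") auto
qed

lemma acts_below_diagonal:
  assumes "acts_below n W" and Z: "\<And>q \<psi>. q < n \<Longrightarrow> W (pauli_on PZ q \<psi>) = pauli_on PZ q (W \<psi>)"
  shows "\<exists>m. \<forall>\<psi> y. W \<psi> y = m (trunc n y) * \<psi> y"
proof -
  obtain M where M: "\<And>\<psi> y. W \<psi> y = (\<Sum>b\<in>configs n. M (trunc n y) b * \<psi> (patch n b y))"
    using assms(1) unfolding acts_below_def by blast
  have "W \<psi> y = M (trunc n y) (trunc n y) * \<psi> y" for \<psi> y
  proof -
    have "W \<psi> y = (\<Sum>b\<in>configs n. if b = trunc n y then M (trunc n y) b * \<psi> (patch n b y) else 0)"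
      unfolding M by (rule sum.cong) (auto simp: commuting_Z_off_diagonal[OF M Z])
    then show ?thesis
      using finite_configs by simp
  qed
  then show ?thesis
    by (intro exI[of _ "\<lambda>a. M a a"]) simp
qed

lemma diagonal_flip:
  assumes W: "\<And>\<psi> y. W \<psi> y = m (trunc n y) * \<psi> y"
    and X: "W (pauli_on PX q (\<lambda>_. 1)) = pauli_on PX q (W (\<lambda>_. 1))"
    and "b \<in> configs n" and "q < n"
  shows "m (b(q := False)) = m b"
proof -
  have "m b = m (b(q := \<not> b q))"
    using fun_cong[OF X, of b] assms(3,4) by (simp add: W pauli_on_def trunc_configs configs_upd)
  then show ?thesis
    by (cases "b q") (simp_all add: fun_upd_idem)
qed

lemma diagonal_constant:
  assumes W: "\<And>\<psi> y. W \<psi> y = m (trunc n y) * \<psi> y"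
    and X: "\<And>q \<psi>. q < n \<Longrightarrow> W (pauli_on PX q \<psi>) = pauli_on PX q (W \<psi>)"
    and "a \<in> configs n"
  shows "m a = m (\<lambda>_. False)"
proof -
  have flip: "m (b(q := False)) = m b" if "b \<in> configs n" "q < n" for b q
    using diagonal_flip[OF W X[OF \<open>q < n\<close>] that] .
  have "m b = m (\<lambda>_. False)" if "b \<in> configs n" "\<forall>q\<ge>k. \<not> b q" for b k
    using that
  proof (induction k arbitrary: b)
    case 0
    then have "b = (\<lambda>_. False)"
      by (simp add: fun_eq_iff)
    then show ?case
      by simp
  next
    case (Suc k)
    show ?case
    proof (cases "k < n")
      case True
      have "b(k := False) \<in> configs n"
        using Suc.prems(1) True by (rule configs_upd)
      moreover have "\<forall>q\<ge>k. \<not> (b(k := False)) q"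
      proof (intro allI impI)
        fix q assume "k \<le> q"
        then show "\<not> (b(k := False)) q"
          using Suc.prems(2) by (cases "q = k") auto
      qed
      ultimately have "m (b(k := False)) = m (\<lambda>_. False)"
        by (rule Suc.IH)
      then show ?thesis
        using flip[OF Suc.prems(1) True] by simp
    next
      case False
      then have "\<forall>q\<ge>k. \<not> b q"
        using Suc.prems by (simp add: configs_def)
      with Suc.prems(1) show ?thesis
        by (rule Suc.IH)
    qed
  qed
  moreover have "\<forall>q\<ge>n. \<not> a q"
    using \<open>a \<in> configs n\<close> by (simp add: configs_def)
  ultimately show ?thesis
    using \<open>a \<in> configs n\<close> by blast
qed

lemma commuting_paulis_scalar:
  assumes "acts_below n W"
    and X: "\<And>q \<psi>. q < n \<Longrightarrow> W (pauli_on PX q \<psi>) = pauli_on PX q (W \<psi>)"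
    and Z: "\<And>q \<psi>. q < n \<Longrightarrow> W (pauli_on PZ q \<psi>) = pauli_on PZ q (W \<psi>)"
  obtains c where "\<And>\<psi> y. W \<psi> y = c * \<psi> y"
proof -
  obtain m where m: "\<And>\<psi> y. W \<psi> y = m (trunc n y) * \<psi> y"
    using acts_below_diagonal[OF assms(1) Z] by blast
  have "W \<psi> y = m (\<lambda>_. False) * \<psi> y" for \<psi> y
    using m diagonal_constant[OF m X] by simp
  then show thesis
    by (rule that)
qed

lemma scalar_circ_unimodular:
  assumes "circ_wf n C" and "\<And>\<psi> y. circ_sem C \<psi> y = c * \<psi> y"
  shows "cmod c = 1"
proof -
  let ?zero = "\<lambda>_::nat. False"
  let ?\<delta> = "\<lambda>z. if z = ?zero then (1::complex) else 0"
  have "?zero \<in> configs n"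
    by (simp add: configs_def)
  then have "block_norm n ?zero ?\<delta> = (\<Sum>b\<in>configs n. if b = ?zero then 1 else 0)"
    unfolding block_norm_def by (intro sum.cong) (auto simp: patch_configs)
  then have "block_norm n ?zero ?\<delta> = 1"
    using finite_configs \<open>?zero \<in> configs n\<close> by simp
  moreover have "block_norm n ?zero (circ_sem C ?\<delta>) = (cmod c)\<^sup>2 * block_norm n ?zero ?\<delta>"
    unfolding block_norm_def by (simp add: assms(2) norm_mult power_mult_distrib sum_distrib_left)
  ultimately have "(cmod c)\<^sup>2 = 1"
    using block_norm_circ[OF assms(1)] by simp
  then show ?thesis
    using norm_ge_zero[of c] by (auto simp: power2_eq_1_iff)
qed

fun gate_inv :: "gate \<Rightarrow> gate" where
  "gate_inv (Pgate q k) = Pgate q (3 * k)"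
| "gate_inv g = g"

lemma gate_sem_inv: "gate_wf n g \<Longrightarrow> gate_sem (gate_inv g) (gate_sem g \<psi>) = \<psi>"
proof (induction g)
  case (Hgate q)
  then show ?case
    by (auto simp: fun_eq_iff field_simps sqrt2_mult_self fun_upd_idem)
next
  case (Pgate q k)
  have "\<i> ^ (3 * k) * \<i> ^ k = \<i> ^ (4 * k)"
    by (simp flip: power_add)
  then have "\<i> ^ (3 * k) * \<i> ^ k = 1"
    by (simp add: power_mult)
  then show ?case
    by (auto simp: fun_eq_iff mult.assoc[symmetric])
next
  case (CNOT c t)
  have "((u = (\<not> v)) = (\<not> v)) = u" for u v
    by blast
  with CNOT show ?case
    by (auto simp: fun_eq_iff)
qed (auto simp: fun_eq_iff)

definition circ_inv :: "gate list \<Rightarrow> gate list" where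
  "circ_inv C = rev (map gate_inv C)"

lemma circ_sem_append: "circ_sem (C @ D) \<psi> = circ_sem D (circ_sem C \<psi>)"
  by (induction C arbitrary: \<psi>) simp_all

lemma circ_sem_inv: "circ_wf n C \<Longrightarrow> circ_sem (circ_inv C) (circ_sem C \<psi>) = \<psi>"
  by (induction C arbitrary: \<psi>) (auto simp: circ_inv_def circ_wf_def circ_sem_append gate_sem_inv)

lemma circ_wf_inv: "circ_wf n C \<Longrightarrow> circ_wf n (circ_inv C)"
proof -
  have "gate_wf n g \<Longrightarrow> gate_wf n (gate_inv g)" for g
    by (cases g) simp_all
  then show "circ_wf n C \<Longrightarrow> circ_wf n (circ_inv C)"
    by (auto simp: circ_wf_def circ_inv_def)
qed

lemma pstr_op_pauli_at: "q < n \<Longrightarrow> pstr_op n (pauli_at a q) \<psi> = pauli_on a q \<psi>"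
proof -
  assume "q < n"
  have "pstr_op n (pauli_at a q) \<psi> = pauli_prod ((\<lambda>_. PI)(q := a)) [0..<n] \<psi>"
    by (simp add: pstr_op_def pauli_at_def sign_def)
  also have "pauli_prod ((\<lambda>_. PI)(q := a)) [0..<n] \<psi> =
             pauli_on a q (pauli_prod ((\<lambda>_. PI)(q := a)) (remove1 q [0..<n]) \<psi>)"
    using \<open>q < n\<close> by (simp add: pauli_prod_remove1)
  also have "pauli_prod ((\<lambda>_. PI)(q := a)) (remove1 q [0..<n]) \<psi> = \<psi>"
    by (rule pauli_prod_PI) auto
  finally show ?thesis .
qed

lemma circ_sem_commutes_pauli_on:
  assumes "circ_wf n C" and "q < n" and "fold conj_gate C (pauli_at a q) = pauli_at a q"
  shows "circ_sem C (pauli_on a q \<psi>) = pauli_on a q (circ_sem C \<psi>)"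
  using circ_sem_pstr_op[OF assms(1), of "pauli_at a q" \<psi>] assms(2,3) by (simp add: pstr_op_pauli_at)

theorem corollary2:
  fixes n :: nat and C :: "gate list"
  assumes "n \<ge> 2" and "circ_wf n C"
  shows "\<exists>C' c. circ_wf n C' \<and> (\<forall>g \<in> set C'. lnn_phcnot_gate g)
           \<and> two_qubit_depth C' \<le> 14 * n - 4
           \<and> cmod c = 1 \<and> (\<forall>\<psi> x. circ_sem C' \<psi> x = c * circ_sem C \<psi> x)"
proof -
  define D where "D = synth n (circ_inv C) n"
  have lnn: "lnn_within 0 n g" if "g \<in> set D" for g
    using that synth_lnn_within[of n n] by (simp add: D_def)
  then have wf_D: "circ_wf n D"
    using lnn_within_circ_wf[of D 0 n n] by blast
  have depth: "two_qubit_depth D \<le> 14 * n - 4"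
    using two_qubit_depth_synth[of n "circ_inv C"] \<open>n \<ge> 2\<close> by (simp add: D_def)
  have wf_W: "circ_wf n (circ_inv C @ D)"
    using circ_wf_inv[OF assms(2)] wf_D by (auto simp: circ_wf_def)
  have "circ_sem (circ_inv C @ D) (pauli_on a q \<psi>) = pauli_on a q (circ_sem (circ_inv C @ D) \<psi>)"
    if "q < n" "a \<in> {PX, PZ}" for a q \<psi>
    using synth_fixes_paulis[OF circ_wf_inv[OF assms(2)], of n] that
    by (intro circ_sem_commutes_pauli_on[OF wf_W]) (auto simp: D_def)
  then obtain c where c: "\<And>\<psi> y. circ_sem (circ_inv C @ D) \<psi> y = c * \<psi> y"
    using commuting_paulis_scalar[OF acts_below_circ[OF wf_W]] by blast
  have "circ_sem D \<psi> x = c * circ_sem C \<psi> x" for \<psi> x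
    using c[of "circ_sem C \<psi>" x] circ_sem_inv[OF assms(2)] by (simp add: circ_sem_append)
  then show ?thesis
    using wf_D lnn depth scalar_circ_unimodular[OF wf_W c] by (auto simp: lnn_within_def)
qed

end
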